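(* Fix an association $\kappa$ in which every cell serves at least one UE and every UE is served by at least one cell, a power vector $\bm{p}\in\mathbb{R}^n_{>0}$ and a demand vector $\bm{d}\in\mathbb{R}^m_{>0}$. For a noise power $\sigma^2>0$ and a load vector $\bm{x}\in\mathbb{R}^n_{\ge 0}$, define $\bm{F}(\sigma^2,\bm{x})\in\mathbb{R}^n$ by $$F_i(\sigma^2,\bm{x})=\sum_{j\in\mathcal{J}_i}\frac{d_j}{MB\log_2\!\big(1+\gamma_j(\sigma^2,\bm{x})\big)},\qquad \gamma_j(\sigma^2,\bm{x})=\frac{\sum_{i'\in\mathcal{I}_j}p_{i'}g_{i'j}}{\sum_{k\in\mathcal{I}\setminus\mathcal{I}_j}p_kg_{kj}x_k+\sigma^2}.$$ Then $\bm{F}$ is scalable jointly in $(\sigma^2,\bm{x})$: for every $\sigma^2>0$, every $\bm{x}\in\mathbb{R}^n_{\ge0}$ and every $\alpha>1$, $$\alpha\,F_i(\sigma^2,\bm{x})>F_i(\alpha\sigma^2,\alpha\bm{x})\quad\text{for all } i\in\mathcal{I}.$$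
   Context: Cellular network model. $\mathcal{I}$ is a finite set of $n$ cells and $\mathcal{J}$ a finite set of $m$ user equipments (UEs). An association is a matrix $\kappa\in\{0,1\}^{n\times m}$. It determines $\mathcal{I}_j=\{i:\kappa_{ij}=1\}$, the set of cells serving UE $j$, and $\mathcal{J}_i=\{j:\kappa_{ij}=1\}$, the set of UEs served by cell $i$. $M>0$ is the number of resource units and $B>0$ the bandwidth per resource unit. The channel gains satisfy $g_{ij}>0$. The standing assumption that every cell serves at least one UE makes the load function positive, as the paper requires. *)

theory Defs
  imports "HOL-Analysis.Analysis"
begin

text \<open>Cells form a finite set I, UEs a finite set J; the association is kappa i j
  (kappa i j = True iff kappa_ij = 1). Vectors are functions on the index sets.\<close>

definition serving_cells :: "'c set \<Rightarrow> ('c \<Rightarrow> 'u \<Rightarrow> bool) \<Rightarrow> 'u \<Rightarrow> 'c set" where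
  "serving_cells I kappa j = {i \<in> I. kappa i j}"

definition served_ues :: "'u set \<Rightarrow> ('c \<Rightarrow> 'u \<Rightarrow> bool) \<Rightarrow> 'c \<Rightarrow> 'u set" where
  "served_ues J kappa i = {j \<in> J. kappa i j}"

definition sinr :: "'c set \<Rightarrow> ('c \<Rightarrow> 'u \<Rightarrow> bool) \<Rightarrow> ('c \<Rightarrow> real) \<Rightarrow> ('c \<Rightarrow> 'u \<Rightarrow> real)
    \<Rightarrow> real \<Rightarrow> ('c \<Rightarrow> real) \<Rightarrow> 'u \<Rightarrow> real" where
  "sinr I kappa p g s2 x j =
     (\<Sum>i'\<in>serving_cells I kappa j. p i' * g i' j) /
     ((\<Sum>k\<in>I - serving_cells I kappa j. p k * g k j * x k) + s2)"

definition load_map :: "'c set \<Rightarrow> 'u set \<Rightarrow> ('c \<Rightarrow> 'u \<Rightarrow> bool) \<Rightarrow> real \<Rightarrow> real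
    \<Rightarrow> ('c \<Rightarrow> real) \<Rightarrow> ('u \<Rightarrow> real) \<Rightarrow> ('c \<Rightarrow> 'u \<Rightarrow> real)
    \<Rightarrow> real \<Rightarrow> ('c \<Rightarrow> real) \<Rightarrow> 'c \<Rightarrow> real" where
  "load_map I J kappa M B p d g s2 x i =
     (\<Sum>j\<in>served_ues J kappa i. d j / (M * B * log 2 (1 + sinr I kappa p g s2 x j)))"

end

theory Submission
  imports Defs
begin

text \<open>Scaling noise and loads by \<alpha> divides every SINR by \<alpha>. Since \<gamma> \<mapsto> log (1 + \<gamma>) is
  strictly concave and vanishes at 0, we have log (1 + \<gamma>) < \<alpha> log (1 + \<gamma>/\<alpha>) for \<gamma> > 0,
  so each summand d_j / (M B log_2 (1 + \<gamma>_j)) of F_i grows by a factor strictly less than \<alpha>.\<close>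

lemma ln_one_plus_lt_mult_ln_one_plus_div:
  fixes \<gamma> a :: real
  assumes "\<gamma> > 0" "a > 1"
  shows "ln (1 + \<gamma>) < a * ln (1 + \<gamma> / a)"
proof -
  define t where "t = \<gamma> / a"
  have t: "t > 0" and \<gamma>: "\<gamma> = a * t"
    using assms by (simp_all add: t_def)
  have "ln (1 + \<gamma>) - ln (1 + t) = ln ((1 + \<gamma>) / (1 + t))"
  proof -
    have "1 + \<gamma> > 0" "1 + t > 0"
      using t assms \<gamma> by (simp_all add: add_pos_pos)
    then show ?thesis
      by (simp add: ln_div)
  qed
  also have "(1 + \<gamma>) / (1 + t) = 1 + (a - 1) * t / (1 + t)"
    using t by (simp add: \<gamma> field_simps)
  also have "ln \<dots> < (a - 1) * t / (1 + t)"
    using t assms by (intro ln_add_one_self_less_self) simp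
  also have "\<dots> = (a - 1) * (t / (1 + t))"
    by simp
  also have "\<dots> < (a - 1) * ln (1 + t)"
    using t assms ln_add1_gt[of t] by (intro mult_strict_left_mono) (auto simp: add.commute)
  finally show ?thesis
    by (simp add: t_def algebra_simps)
qed

lemma log_one_plus_lt_mult_log_one_plus_div:
  fixes b \<gamma> a :: real
  assumes "b > 1" "\<gamma> > 0" "a > 1"
  shows "log b (1 + \<gamma>) < a * log b (1 + \<gamma> / a)"
  using ln_one_plus_lt_mult_ln_one_plus_div[OF assms(2,3)] assms(1)
  by (simp add: log_def divide_strict_right_mono)

lemma rate_cost_scalable:
  fixes \<gamma> \<alpha> c d :: real
  assumes "\<gamma> > 0" "\<alpha> > 1" "c > 0" "d > 0"
  shows "d / (c * log 2 (1 + \<gamma> / \<alpha>)) < \<alpha> * (d / (c * log 2 (1 + \<gamma>)))"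
proof -
  have L: "log 2 (1 + \<gamma>) > 0"
    using assms by simp
  have "\<gamma> / \<alpha> > 0"
    using assms by simp
  then have L': "log 2 (1 + \<gamma> / \<alpha>) > 0"
    by (intro zero_less_log_cancel_iff[THEN iffD2]) auto
  have "d * (c * log 2 (1 + \<gamma>)) < \<alpha> * d * (c * log 2 (1 + \<gamma> / \<alpha>))"
    using log_one_plus_lt_mult_log_one_plus_div[of 2 \<gamma> \<alpha>] assms
    by (simp add: algebra_simps)
  then show ?thesis
    using L L' assms by (simp add: field_simps)
qed

lemma sinr_scale:
  assumes "\<alpha> \<noteq> 0"
  shows "sinr I kappa p g (\<alpha> * s2) (\<lambda>k. \<alpha> * x k) j = sinr I kappa p g s2 x j / \<alpha>"
proof -
  have "(\<Sum>k\<in>I - serving_cells I kappa j. p k * g k j * (\<alpha> * x k)) + \<alpha> * s2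
      = \<alpha> * ((\<Sum>k\<in>I - serving_cells I kappa j. p k * g k j * x k) + s2)"
    by (simp add: sum_distrib_left algebra_simps)
  then show ?thesis
    by (simp add: sinr_def)
qed

lemma sinr_pos:
  assumes "finite I" "s2 > 0" "j \<in> J"
    and "\<And>i. i \<in> I \<Longrightarrow> g i j > 0" "\<And>i. i \<in> I \<Longrightarrow> p i > 0" "\<And>i. i \<in> I \<Longrightarrow> x i \<ge> 0"
    and "\<exists>i\<in>I. kappa i j"
  shows "sinr I kappa p g s2 x j > 0"
proof -
  obtain i0 where "i0 \<in> serving_cells I kappa j"
    using assms(7) by (auto simp: serving_cells_def)
  moreover have "finite (serving_cells I kappa j)"
    using assms(1) by (simp add: serving_cells_def)
  ultimately have "(\<Sum>i\<in>serving_cells I kappa j. p i * g i j) > 0"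
    using assms(4,5) by (intro sum_pos2[of _ i0])
      (auto simp: serving_cells_def intro!: less_imp_le)
  moreover have "(\<Sum>k\<in>I - serving_cells I kappa j. p k * g k j * x k) \<ge> 0"
    using assms(4-6) by (intro sum_nonneg) (simp add: less_imp_le)
  ultimately show ?thesis
    using assms(2) by (simp add: sinr_def)
qed

theorem proposition2:
  fixes I :: "'c set" and J :: "'u set" and kappa :: "'c \<Rightarrow> 'u \<Rightarrow> bool"
    and M B :: real and p :: "'c \<Rightarrow> real" and d :: "'u \<Rightarrow> real"
    and g :: "'c \<Rightarrow> 'u \<Rightarrow> real"
  assumes "finite I" and "finite J"
    and "M > 0" and "B > 0"
    and "\<And>i j. i \<in> I \<Longrightarrow> j \<in> J \<Longrightarrow> g i j > 0"
    and "\<And>i. i \<in> I \<Longrightarrow> \<exists>j\<in>J. kappa i j"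
    and "\<And>j. j \<in> J \<Longrightarrow> \<exists>i\<in>I. kappa i j"
    and "\<And>i. i \<in> I \<Longrightarrow> p i > 0"
    and "\<And>j. j \<in> J \<Longrightarrow> d j > 0"
  shows "\<forall>s2 > 0. \<forall>x. (\<forall>i\<in>I. x i \<ge> 0) \<longrightarrow> (\<forall>\<alpha> > 1. \<forall>i\<in>I.
           \<alpha> * load_map I J kappa M B p d g s2 x i
             > load_map I J kappa M B p d g (\<alpha> * s2) (\<lambda>k. \<alpha> * x k) i)"
proof (intro allI impI ballI)
  fix s2 :: real and x :: "'c \<Rightarrow> real" and \<alpha> :: real and i
  assume s2: "s2 > 0" and x: "\<forall>i\<in>I. x i \<ge> 0" and \<alpha>: "\<alpha> > 1" and i: "i \<in> I"
  have term_less: "d j / (M * B * log 2 (1 + sinr I kappa p g (\<alpha> * s2) (\<lambda>k. \<alpha> * x k) j))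
      < \<alpha> * (d j / (M * B * log 2 (1 + sinr I kappa p g s2 x j)))" if "j \<in> J" for j
    using rate_cost_scalable[OF sinr_pos[of I s2 j J g p x kappa] \<alpha>] that assms s2 x \<alpha>
    by (simp add: sinr_scale)
  obtain j0 where "j0 \<in> served_ues J kappa i"
    using assms(6)[OF i] by (auto simp: served_ues_def)
  moreover have "finite (served_ues J kappa i)"
    using assms(2) by (simp add: served_ues_def)
  ultimately show "\<alpha> * load_map I J kappa M B p d g s2 x i
      > load_map I J kappa M B p d g (\<alpha> * s2) (\<lambda>k. \<alpha> * x k) i"
    unfolding load_map_def sum_distrib_left
    by (intro sum_strict_mono) (use term_less in \<open>auto simp: served_ues_def\<close>)
qed

end
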